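(* If $G$ is a group in which every non-trivial element is a generalized torsion element, then $\mathrm{scl}_G(g)=0$ for all $g\in G$.
   Context: For $g,x$ in a group, $g^{x}:=xgx^{-1}$. A non-trivial element $g$ of a group $G$ is a generalized torsion element if there exist a positive integer $n$ and $x_1,\ldots,x_n\in G$ with $g^{x_1}g^{x_2}\cdots g^{x_n}=1$. For $g\in[G,G]$, the commutator length $\mathrm{cl}_G(g)$ is the least number of commutators whose product is $g$, and the stable commutator length is $\mathrm{scl}_G(g)=\lim_{n\to\infty}\mathrm{cl}_G(g^n)/n$. This is extended to all of $G$ by $\mathrm{scl}_G(g)=\mathrm{scl}_G(g^k)/k$ if $g^k\in[G,G]$ for some $k>0$, and $\mathrm{scl}_G(g)=\infty$ otherwise. *)

theory Defs
  imports "HOL-Algebra.Algebra" "HOL-Library.Extended_Real"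
begin

text \<open>Conjugation convention of the paper: g^x = x g x^{-1}.\<close>
definition conjug :: "('a, 'b) monoid_scheme \<Rightarrow> 'a \<Rightarrow> 'a \<Rightarrow> 'a" where
  "conjug G g x = x \<otimes>\<^bsub>G\<^esub> g \<otimes>\<^bsub>G\<^esub> inv\<^bsub>G\<^esub> x"

definition gen_torsion :: "('a, 'b) monoid_scheme \<Rightarrow> 'a \<Rightarrow> bool" where
  "gen_torsion G g \<longleftrightarrow> g \<in> carrier G \<and> g \<noteq> \<one>\<^bsub>G\<^esub> \<and>
     (\<exists>xs. length xs > 0 \<and> set xs \<subseteq> carrier G \<and>
        foldr (\<lambda>x r. conjug G g x \<otimes>\<^bsub>G\<^esub> r) xs \<one>\<^bsub>G\<^esub> = \<one>\<^bsub>G\<^esub>)"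

definition commutator :: "('a, 'b) monoid_scheme \<Rightarrow> 'a \<Rightarrow> 'a \<Rightarrow> 'a" where
  "commutator G a b = a \<otimes>\<^bsub>G\<^esub> b \<otimes>\<^bsub>G\<^esub> inv\<^bsub>G\<^esub> a \<otimes>\<^bsub>G\<^esub> inv\<^bsub>G\<^esub> b"

text \<open>Commutator length: least number of commutators whose product is g
  (meaningful for g in the commutator subgroup derived G (carrier G)).\<close>
definition comm_length :: "('a, 'b) monoid_scheme \<Rightarrow> 'a \<Rightarrow> nat" where
  "comm_length G g = (LEAST k. \<exists>cs. length cs = k \<and>
      (\<forall>(a, b) \<in> set cs. a \<in> carrier G \<and> b \<in> carrier G) \<and>
      g = foldr (\<lambda>(a, b) r. commutator G a b \<otimes>\<^bsub>G\<^esub> r) cs \<one>\<^bsub>G\<^esub>)"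

definition scl0 :: "('a, 'b) monoid_scheme \<Rightarrow> 'a \<Rightarrow> real" where
  "scl0 G g = lim (\<lambda>n. real (comm_length G (g [^]\<^bsub>G\<^esub> n)) / real n)"

definition scl :: "('a, 'b) monoid_scheme \<Rightarrow> 'a \<Rightarrow> ereal" where
  "scl G g = (if \<exists>k::nat. k > 0 \<and> g [^]\<^bsub>G\<^esub> k \<in> derived G (carrier G)
     then (let k = (LEAST k::nat. k > 0 \<and> g [^]\<^bsub>G\<^esub> k \<in> derived G (carrier G))
           in ereal (scl0 G (g [^]\<^bsub>G\<^esub> k) / real k))
     else \<infinity>)"

end

theory Submission
  imports Defs
begin

text \<open>Since x v x^-1 v^L = v^(L+1) [v^-(L+1) x, v], a relation x_1 v x_1^-1 ... x_N v x_N^-1 = 1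
  exhibits v^-N as a product of N commutators. So every element has a power in [G,G], and for
  h in [G,G] and m > 0, applying this to v = h^-m gives cl(h^(mN)) <= N. Subadditivity of cl
  then yields cl(h^n) <= n/m + O(1); as m is arbitrary, cl(h^n)/n tends to 0.\<close>

definition commutator_prod :: "('a, 'b) monoid_scheme \<Rightarrow> ('a \<times> 'a) list \<Rightarrow> 'a" where
  "commutator_prod G cs = foldr (\<lambda>(a, b) r. commutator G a b \<otimes>\<^bsub>G\<^esub> r) cs \<one>\<^bsub>G\<^esub>"

definition prod_of_commutators :: "('a, 'b) monoid_scheme \<Rightarrow> nat \<Rightarrow> 'a \<Rightarrow> bool" where
  "prod_of_commutators G k g \<longleftrightarrow>
     (\<exists>cs. length cs = k \<and> set cs \<subseteq> carrier G \<times> carrier G \<and> g = commutator_prod G cs)"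

lemma commutator_prod_Nil [simp]: "commutator_prod G [] = \<one>\<^bsub>G\<^esub>"
  by (simp add: commutator_prod_def)

lemma commutator_prod_Cons [simp]:
  "commutator_prod G ((a, b) # cs) = commutator G a b \<otimes>\<^bsub>G\<^esub> commutator_prod G cs"
  by (simp add: commutator_prod_def)

lemma comm_length_eq_Least: "comm_length G g = (LEAST k. prod_of_commutators G k g)"
  unfolding comm_length_def prod_of_commutators_def commutator_prod_def
  by (intro arg_cong[where f = Least] ext) fast

lemma comm_length_le: "prod_of_commutators G k g \<Longrightarrow> comm_length G g \<le> k"
  unfolding comm_length_eq_Least by (rule Least_le)

lemma prod_of_commutators_comm_length:
  "prod_of_commutators G k g \<Longrightarrow> prod_of_commutators G (comm_length G g) g"
  unfolding comm_length_eq_Least by (rule LeastI)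

lemma LIMSEQ_divide_self_zero_if_sublinear:
  fixes a :: "nat \<Rightarrow> real"
  assumes nonneg: "\<And>n. 0 \<le> a n"
    and sublinear: "\<And>m. m > 0 \<Longrightarrow> \<exists>E. \<forall>n. a n \<le> real n / real m + E"
  shows "(\<lambda>n. a n / real n) \<longlonglongrightarrow> 0"
proof (rule LIMSEQ_I)
  fix r :: real assume r: "0 < r"
  define m where "m = nat \<lceil>2 / r\<rceil> + 1"
  have "m > 0" "real m > 2 / r" unfolding m_def by linarith+
  then have m: "1 / real m < r / 2" using r by (simp add: field_simps)
  obtain E where E: "\<And>n. a n \<le> real n / real m + E" using sublinear \<open>m > 0\<close> by blast
  have "\<bar>a n / real n\<bar> < r" if n: "n \<ge> nat \<lceil>2 * E / r\<rceil> + 1" for n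
  proof -
    have "real n > 0" "real n > 2 * E / r" using n by linarith+
    then have "E / real n < r / 2" using r by (simp add: field_simps)
    have "a n / real n \<le> (real n / real m + E) / real n"
      using E[of n] \<open>real n > 0\<close> by (simp add: divide_right_mono)
    also have "\<dots> = 1 / real m + E / real n" using \<open>real n > 0\<close> by (simp add: field_simps)
    also have "\<dots> < r" using m \<open>E / real n < r / 2\<close> by linarith
    finally show ?thesis using nonneg[of n] by simp
  qed
  then show "\<exists>n\<^sub>0. \<forall>n\<ge>n\<^sub>0. norm (a n / real n - 0) < r" by auto
qed

context group
begin

lemma commutator_closed [simp]:
  "a \<in> carrier G \<Longrightarrow> b \<in> carrier G \<Longrightarrow> commutator G a b \<in> carrier G"
  by (simp add: commutator_def)

lemma commutator_prod_closed [simp]: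
  "set cs \<subseteq> carrier G \<times> carrier G \<Longrightarrow> commutator_prod G cs \<in> carrier G"
  by (induction cs) auto

lemma commutator_prod_append:
  "set cs \<subseteq> carrier G \<times> carrier G \<Longrightarrow> set ds \<subseteq> carrier G \<times> carrier G \<Longrightarrow>
   commutator_prod G (cs @ ds) = commutator_prod G cs \<otimes> commutator_prod G ds"
  by (induction cs) (auto simp: m_assoc)

lemma prod_of_commutators_one: "prod_of_commutators G 0 \<one>"
  unfolding prod_of_commutators_def by simp

lemma prod_of_commutators_commutator:
  "a \<in> carrier G \<Longrightarrow> b \<in> carrier G \<Longrightarrow> prod_of_commutators G 1 (commutator G a b)"
  unfolding prod_of_commutators_def
  by (intro exI[of _ "[(a, b)]"]) simp

lemma prod_of_commutators_mult:
  assumes "prod_of_commutators G k x" "prod_of_commutators G l y"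
  shows "prod_of_commutators G (k + l) (x \<otimes> y)"
proof -
  obtain cs ds where "length cs = k" "set cs \<subseteq> carrier G \<times> carrier G" "x = commutator_prod G cs"
    "length ds = l" "set ds \<subseteq> carrier G \<times> carrier G" "y = commutator_prod G ds"
    using assms unfolding prod_of_commutators_def by blast
  then show ?thesis
    unfolding prod_of_commutators_def by (intro exI[of _ "cs @ ds"]) (simp add: commutator_prod_append)
qed

lemma prod_of_commutators_pow:
  "prod_of_commutators G k x \<Longrightarrow> prod_of_commutators G (k * n) (x [^] n)"
proof (induction n)
  case 0
  then show ?case by (simp add: prod_of_commutators_one)
next
  case (Suc n)
  then show ?case using prod_of_commutators_mult[of "k * n" "x [^] n" k x] by (simp add: add.commute)
qed

lemma derived_iff_prod_of_commutators:
  "x \<in> derived G (carrier G) \<longleftrightarrow> (\<exists>k. prod_of_commutators G k x)"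
proof
  assume "x \<in> derived G (carrier G)"
  then show "\<exists>k. prod_of_commutators G k x"
    unfolding derived_def
  proof (induction rule: generate.induct)
    case one
    then show ?case using prod_of_commutators_one by blast
  next
    case (incl h)
    then show ?case using prod_of_commutators_commutator by (auto simp: commutator_def)
  next
    case (inv h)
    then obtain a b where "a \<in> carrier G" "b \<in> carrier G" "h = a \<otimes> b \<otimes> inv a \<otimes> inv b"
      by blast
    then have "inv h = commutator G b a"
      by (simp add: commutator_def inv_mult_group m_assoc)
    then show ?case using prod_of_commutators_commutator \<open>a \<in> carrier G\<close> \<open>b \<in> carrier G\<close> by metis
  next
    case (eng h1 h2)
    then show ?case using prod_of_commutators_mult by blast
  qed
next
  assume "\<exists>k. prod_of_commutators G k x"
  then obtain cs where cs: "set cs \<subseteq> carrier G \<times> carrier G" "x = commutator_prod G cs"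
    unfolding prod_of_commutators_def by blast
  interpret derived: subgroup "derived G (carrier G)" G
    by (rule derived_is_subgroup) simp
  have comm: "commutator G a b \<in> derived G (carrier G)" if "a \<in> carrier G" "b \<in> carrier G" for a b
    unfolding derived_def commutator_def using that by (blast intro: generate.incl)
  have "commutator_prod G cs \<in> derived G (carrier G)"
    using cs(1)
  proof (induction cs)
    case Nil
    then show ?case by simp
  next
    case (Cons c cs)
    then show ?case using comm by (cases c) simp
  qed
  then show "x \<in> derived G (carrier G)" using cs(2) by simp
qed

lemma comm_length_pow_le_periodic:
  assumes x: "x \<in> derived G (carrier G)" and "N > 0"
    and period: "prod_of_commutators G K (x [^] N)"
  shows "\<exists>C. \<forall>n. comm_length G (x [^] n) \<le> n div N * K + C"
proof -
  have xc: "x \<in> carrier G" using x derived_in_carrier[of "carrier G"] by blast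
  obtain k where k: "prod_of_commutators G k x" using x derived_iff_prod_of_commutators by blast
  define C where "C = (\<Sum>r<N. comm_length G (x [^] r))"
  have "comm_length G (x [^] n) \<le> n div N * K + C" for n
  proof -
    have split: "x [^] n = (x [^] N) [^] (n div N) \<otimes> x [^] (n mod N)"
      using xc by (simp add: nat_pow_pow nat_pow_mult)
    have "prod_of_commutators G (K * (n div N) + comm_length G (x [^] (n mod N))) (x [^] n)"
      unfolding split
      by (intro prod_of_commutators_mult prod_of_commutators_pow[OF period]
          prod_of_commutators_comm_length[OF prod_of_commutators_pow[OF k]])
    then have "comm_length G (x [^] n) \<le> K * (n div N) + comm_length G (x [^] (n mod N))"
      by (rule comm_length_le)
    also have "comm_length G (x [^] (n mod N)) \<le> C"
      unfolding C_def using \<open>N > 0\<close> by (intro member_le_sum) auto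
    finally show ?thesis by (simp add: mult.commute)
  qed
  then show ?thesis by blast
qed

lemma conjug_mult_pow:
  assumes "v \<in> carrier G" "x \<in> carrier G" "y \<in> carrier G"
  shows "conjug G v x \<otimes> (v [^] L \<otimes> y) =
     v [^] Suc L \<otimes> (commutator G (inv (v [^] Suc L) \<otimes> x) v \<otimes> y)"
proof -
  have cancel: "a \<otimes> (inv a \<otimes> z) = z" if "a \<in> carrier G" "z \<in> carrier G" for a z
    using that by (simp flip: m_assoc)
  have "v [^] Suc L = v [^] L \<otimes> v" by simp
  then show ?thesis
    unfolding conjug_def commutator_def using assms by (simp add: m_assoc inv_mult_group cancel)
qed

lemma conjugates_prod_eq_pow_mult_commutator_prod:
  assumes "v \<in> carrier G" "set xs \<subseteq> carrier G"
  shows "\<exists>cs. length cs = length xs \<and> set cs \<subseteq> carrier G \<times> carrier G \<and>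
     foldr (\<lambda>x r. conjug G v x \<otimes> r) xs \<one> = v [^] length xs \<otimes> commutator_prod G cs"
  using assms(2)
proof (induction xs)
  case Nil
  then show ?case by simp
next
  case (Cons x xs)
  then obtain cs where cs: "length cs = length xs" "set cs \<subseteq> carrier G \<times> carrier G"
     "foldr (\<lambda>x r. conjug G v x \<otimes> r) xs \<one> = v [^] length xs \<otimes> commutator_prod G cs"
    by auto
  let ?c = "(inv (v [^] Suc (length xs)) \<otimes> x, v)"
  have "foldr (\<lambda>x r. conjug G v x \<otimes> r) (x # xs) \<one> =
      conjug G v x \<otimes> (v [^] length xs \<otimes> commutator_prod G cs)"
    using cs by simp
  also have "\<dots> = v [^] length (x # xs) \<otimes> commutator_prod G (?c # cs)"
    using Cons.prems cs assms(1) by (simp add: conjug_mult_pow)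
  finally show ?case
    using Cons.prems cs assms(1) by (intro exI[of _ "?c # cs"]) auto
qed

lemma gen_torsion_prod_of_commutators:
  assumes "gen_torsion G v"
  shows "\<exists>N > 0. prod_of_commutators G N (inv v [^] N)"
proof -
  obtain xs where xs: "length xs > 0" "set xs \<subseteq> carrier G"
    "foldr (\<lambda>x r. conjug G v x \<otimes> r) xs \<one> = \<one>" and v: "v \<in> carrier G"
    using assms unfolding gen_torsion_def by blast
  obtain cs where cs: "length cs = length xs" "set cs \<subseteq> carrier G \<times> carrier G"
    "foldr (\<lambda>x r. conjug G v x \<otimes> r) xs \<one> = v [^] length xs \<otimes> commutator_prod G cs"
    using conjugates_prod_eq_pow_mult_commutator_prod[OF v xs(2)] by blast
  have "v [^] length xs \<otimes> commutator_prod G cs = \<one>" using xs(3) by (simp only: cs(3))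
  then have "commutator_prod G cs \<otimes> v [^] length xs = \<one>"
    by (rule inv_comm) (use v cs(2) in simp_all)
  then have "inv (v [^] length xs) = commutator_prod G cs"
    by (rule inv_equality) (use v cs(2) in simp_all)
  then have "commutator_prod G cs = inv v [^] length xs"
    using v by (simp add: nat_pow_inv)
  then have "prod_of_commutators G (length xs) (inv v [^] length xs)"
    unfolding prod_of_commutators_def using cs(1,2) by (intro exI[of _ cs]) simp
  then show ?thesis using xs(1) by blast
qed

end

locale gen_torsion_group = group +
  assumes nontrivial_gen_torsion: "g \<in> carrier G \<Longrightarrow> g \<noteq> \<one> \<Longrightarrow> gen_torsion G g"
begin

lemma pow_prod_of_commutators:
  assumes "u \<in> carrier G"
  shows "\<exists>N > 0. prod_of_commutators G N (u [^] N)"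
proof (cases "u = \<one>")
  case True
  then show ?thesis using prod_of_commutators_commutator[of \<one> \<one>]
    by (intro exI[of _ 1]) (simp add: commutator_def)
next
  case False
  then have "gen_torsion G (inv u)" using assms by (simp add: nontrivial_gen_torsion)
  then show ?thesis using gen_torsion_prod_of_commutators assms by fastforce
qed

lemma comm_length_pow_sublinear:
  assumes h: "h \<in> derived G (carrier G)" and "m > 0"
  shows "\<exists>E. \<forall>n. real (comm_length G (h [^] n)) \<le> real n / real m + E"
proof -
  have "h \<in> carrier G" using h derived_in_carrier[of "carrier G"] by blast
  then obtain N where "N > 0" and "prod_of_commutators G N ((h [^] m) [^] N)"
    using pow_prod_of_commutators by blast
  then have "prod_of_commutators G N (h [^] (m * N))"
    using \<open>h \<in> carrier G\<close> by (simp add: nat_pow_pow)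
  moreover have "m * N > 0" using \<open>m > 0\<close> \<open>N > 0\<close> by simp
  ultimately obtain C where C: "\<And>n. comm_length G (h [^] n) \<le> n div (m * N) * N + C"
    using comm_length_pow_le_periodic[OF h] by blast
  have "real (comm_length G (h [^] n)) \<le> real n / real m + C" for n
  proof -
    have "real (n div (m * N) * N) * real m \<le> real n"
      using div_times_less_eq_dividend[of n "m * N"] unfolding of_nat_mult [symmetric]
      by (simp only: of_nat_le_iff mult.assoc mult.commute[of N m])
    then have "real (n div (m * N) * N) \<le> real n / real m"
      using \<open>m > 0\<close> by (simp add: le_divide_eq)
    then show ?thesis using C[of n] by linarith
  qed
  then show ?thesis by blast
qed

lemma scl0_derived_eq_0:
  assumes "h \<in> derived G (carrier G)"
  shows "scl0 G h = 0"
  unfolding scl0_def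
  by (intro limI LIMSEQ_divide_self_zero_if_sublinear comm_length_pow_sublinear assms) simp_all

end

theorem proposition3p3:
  fixes G :: "('a, 'b) monoid_scheme"
  assumes "group G"
    and "\<forall>g \<in> carrier G. g \<noteq> \<one>\<^bsub>G\<^esub> \<longrightarrow> gen_torsion G g"
  shows "\<forall>g \<in> carrier G. scl G g = 0"
proof
  interpret gen_torsion_group G
    using assms by (simp add: gen_torsion_group_def gen_torsion_group_axioms_def)
  fix g assume "g \<in> carrier G"
  let ?P = "\<lambda>k::nat. k > 0 \<and> g [^]\<^bsub>G\<^esub> k \<in> derived G (carrier G)"
  obtain N where "N > 0" "prod_of_commutators G N (g [^]\<^bsub>G\<^esub> N)"
    using pow_prod_of_commutators \<open>g \<in> carrier G\<close> by blast
  then have "\<exists>k. ?P k"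
    using derived_iff_prod_of_commutators by blast
  moreover have "scl0 G (g [^]\<^bsub>G\<^esub> (LEAST k. ?P k)) = 0"
    using LeastI_ex[OF \<open>\<exists>k. ?P k\<close>] scl0_derived_eq_0 by blast
  ultimately show "scl G g = 0"
    unfolding scl_def by simp
qed

end
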